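(* For every integer $j\ge 0$: (a) $f^*(3j+2,2)=2j+1+\dfrac{2j+1}{3j+2}$; (b) $f^*(3j+3,2)=2j+2+\dfrac{j+1}{3j+4}$.
   Context: For integers $d\ge 1$, $n\ge 1$, the triangular grid is $T_d(n)=\{(x_1,\dots,x_d)\in\mathbb{Z}_{\ge 0}^d : x_1+\dots+x_d\le n-1\}$. A fractional cover of $T_d(n)$ is an assignment of nonnegative weights $w(H)$ to affine hyperplanes $H$ of $\mathbb{R}^d$ (only finitely many nonzero) such that $\sum_{H\ni p} w(H)\ge 1$ for every $p\in T_d(n)$. $f^*(n,d)$ denotes the minimum of $\sum_H w(H)$ over all fractional covers of $T_d(n)$. *)

theory Defs
  imports Complex_Main
begin

text \<open>Points of R^d are represented as functions nat => real vanishing outside {0..<d}.\<close>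

definition rpoints :: "nat \<Rightarrow> (nat \<Rightarrow> real) set" where
  "rpoints d = {x. \<forall>i\<ge>d. x i = 0}"

definition affine_hyperplane :: "nat \<Rightarrow> (nat \<Rightarrow> real) set \<Rightarrow> bool" where
  "affine_hyperplane d H \<longleftrightarrow>
     (\<exists>a b. (\<exists>i<d. a i \<noteq> 0) \<and>
            H = {x \<in> rpoints d. (\<Sum>i<d. a i * x i) = b})"

definition tri_grid :: "nat \<Rightarrow> nat \<Rightarrow> (nat \<Rightarrow> real) set" where
  "tri_grid d n = {x \<in> rpoints d. (\<forall>i<d. \<exists>k::nat. x i = real k) \<and>
                                   (\<Sum>i<d. x i) \<le> real n - 1}"

definition wsupp :: "((nat \<Rightarrow> real) set \<Rightarrow> real) \<Rightarrow> (nat \<Rightarrow> real) set set" where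
  "wsupp w = {H. w H \<noteq> 0}"

definition frac_cover :: "nat \<Rightarrow> nat \<Rightarrow> ((nat \<Rightarrow> real) set \<Rightarrow> real) \<Rightarrow> bool" where
  "frac_cover d n w \<longleftrightarrow>
     finite (wsupp w) \<and> (\<forall>H. w H \<ge> 0) \<and>
     (\<forall>H \<in> wsupp w. affine_hyperplane d H) \<and>
     (\<forall>p \<in> tri_grid d n. (\<Sum>H \<in> {H \<in> wsupp w. p \<in> H}. w H) \<ge> 1)"

definition total_weight :: "((nat \<Rightarrow> real) set \<Rightarrow> real) \<Rightarrow> real" where
  "total_weight w = (\<Sum>H \<in> wsupp w. w H)"

definition fstar :: "nat \<Rightarrow> nat \<Rightarrow> real" where
  "fstar n d = Inf (total_weight ` {w. frac_cover d n w})"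

end

theory Submission
  imports Defs
begin

text \<open>Write \<open>n = S + 1\<close> and use the barycentric coordinates \<open>(x, y, S - x - y)\<close> of the grid. For the
  upper bound, every line on which a barycentric coordinate equals \<open>t\<close> gets weight
  \<open>(M - t)\<^sub>+ / (3 M - S)\<close>, with \<open>M = 2 j + 1\<close> resp. \<open>M = 2 j + 2\<close>; this covers every grid point
  and has total weight \<open>3 M (M + 1) / (2 (3 M - S))\<close>. For the lower bound, LP duality reduces the
  claim to a nonnegative weighting of the grid points of the same total weight and with weight at most
  \<open>1\<close> on every line. The weighting is a symmetric function \<open>(u x + u y + u z) / D\<close> of the
  barycentric coordinates, with \<open>u\<close> piecewise linear; its sums along lines parallel to the sides
  are computed exactly. Any other line meets the grid in points whose values of one barycentric
  coordinate are pairwise at least two apart, hence in at most \<open>j + 1\<close> resp. \<open>j + 2\<close> points, and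
  pointwise bounds on the weights finish the argument.\<close>

section \<open>The planar grid and LP duality\<close>

definition pt2 :: "nat \<Rightarrow> nat \<Rightarrow> nat \<Rightarrow> real" where
  "pt2 a b = (\<lambda>i. if i = 0 then real a else if i = 1 then real b else 0)"

definition tri_pairs :: "nat \<Rightarrow> (nat \<times> nat) set" where
  "tri_pairs n = {q. fst q + snd q < n}"

lemma sum_lessThan_2: "(\<Sum>i<2. f i) = f 0 + f (1::nat)" for f :: "nat \<Rightarrow> 'a::comm_monoid_add"
  by (simp add: numeral_2_eq_2)

lemma finite_tri_pairs [simp]: "finite (tri_pairs n)"
  by (rule finite_subset[of _ "{..<n} \<times> {..<n}"]) (auto simp: tri_pairs_def)

lemma pt2_rpoints [simp]: "pt2 a b \<in> rpoints 2"
  by (simp add: rpoints_def pt2_def)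

lemma pt2_apply [simp]: "pt2 a b 0 = real a" "pt2 a b (Suc 0) = real b"
  by (simp_all add: pt2_def)

lemma inj_pt2: "inj_on (case_prod pt2) A"
  by (rule inj_onI) (clarsimp, metis of_nat_eq_iff pt2_apply)

lemma tri_grid_2_eq: "tri_grid 2 n = case_prod pt2 ` tri_pairs n"
proof (intro equalityI subsetI)
  fix x assume "x \<in> tri_grid 2 n"
  then have x: "x \<in> rpoints 2" "\<forall>i<2. \<exists>k::nat. x i = real k" "x 0 + x 1 \<le> real n - 1"
    by (auto simp: tri_grid_def sum_lessThan_2)
  obtain a b :: nat where ab: "x 0 = real a" "x 1 = real b"
    using x(2)[rule_format, of 0] x(2)[rule_format, of 1] by auto
  have "x = pt2 a b"
    using x(1) ab by (auto simp: pt2_def rpoints_def)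
  moreover have "(a, b) \<in> tri_pairs n"
    using x(3) ab by (simp add: tri_pairs_def)
  ultimately show "x \<in> case_prod pt2 ` tri_pairs n"
    by force
next
  fix x assume "x \<in> case_prod pt2 ` tri_pairs n"
  then obtain a b where "x = pt2 a b" "a + b < n"
    by (auto simp: tri_pairs_def)
  then show "x \<in> tri_grid 2 n"
    by (auto simp: tri_grid_def sum_lessThan_2 less_2_cases_iff pt2_def rpoints_def)
qed

lemma total_weight_nonneg: "frac_cover d n w \<Longrightarrow> 0 \<le> total_weight w"
  unfolding frac_cover_def total_weight_def by (simp add: sum_nonneg)

lemma fstar_le_total_weight: "frac_cover d n w \<Longrightarrow> fstar n d \<le> total_weight w"
  unfolding fstar_def
  by (rule cInf_lower) (auto intro!: bdd_belowI[of _ 0] total_weight_nonneg)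

lemma fstar_ge:
  assumes "frac_cover d n w0" and "\<And>w. frac_cover d n w \<Longrightarrow> v \<le> total_weight w"
  shows "v \<le> fstar n d"
  unfolding fstar_def using assms by (intro cInf_greatest) auto

lemma total_weight_ge_dual:
  assumes fin: "finite T" and T: "T \<subseteq> tri_grid d n" and cov: "frac_cover d n w"
    and nonneg: "\<And>p. p \<in> T \<Longrightarrow> 0 \<le> y p"
    and hyperplane: "\<And>H. affine_hyperplane d H \<Longrightarrow> (\<Sum>p\<in>{p\<in>T. p \<in> H}. y p) \<le> 1"
  shows "(\<Sum>p\<in>T. y p) \<le> total_weight w"
proof -
  let ?W = "wsupp w"
  have finW: "finite ?W" and wnn: "\<And>H. 0 \<le> w H"
    and aff: "\<And>H. H \<in> ?W \<Longrightarrow> affine_hyperplane d H"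
    and covered: "\<And>p. p \<in> T \<Longrightarrow> 1 \<le> (\<Sum>H\<in>{H\<in>?W. p \<in> H}. w H)"
    using cov T by (auto simp: frac_cover_def)
  have "(\<Sum>p\<in>T. y p) \<le> (\<Sum>p\<in>T. y p * (\<Sum>H\<in>{H\<in>?W. p \<in> H}. w H))"
    by (intro sum_mono) (use mult_left_mono[OF covered nonneg] in force)
  also have "\<dots> = (\<Sum>H\<in>?W. w H * (\<Sum>p\<in>{p\<in>T. p \<in> H}. y p))"
    by (simp add: sum_distrib_left sum_distrib_right sum.swap_restrict[OF fin finW] mult.commute)
  also have "\<dots> \<le> (\<Sum>H\<in>?W. w H)"
    using mult_left_mono[OF hyperplane[OF aff] wnn] by (intro sum_mono) simp
  finally show ?thesis
    by (simp add: total_weight_def)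
qed

definition grid_line :: "nat \<Rightarrow> real \<Rightarrow> real \<Rightarrow> real \<Rightarrow> (nat \<times> nat) set" where
  "grid_line n c0 c1 \<beta> = {q \<in> tri_pairs n. c0 * real (fst q) + c1 * real (snd q) = \<beta>}"

lemma total_weight_ge_pair_dual:
  assumes cov: "frac_cover 2 n w"
    and nonneg: "\<And>q. q \<in> tri_pairs n \<Longrightarrow> 0 \<le> Y q"
    and line: "\<And>c0 c1 \<beta>. c0 \<noteq> 0 \<or> c1 \<noteq> 0 \<Longrightarrow> sum Y (grid_line n c0 c1 \<beta>) \<le> 1"
  shows "(\<Sum>q\<in>tri_pairs n. Y q) \<le> total_weight w"
proof -
  define y where "y p = Y (nat \<lfloor>p 0\<rfloor>, nat \<lfloor>p 1\<rfloor>)" for p :: "nat \<Rightarrow> real"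
  have y_pt2: "y (pt2 a b) = Y (a, b)" for a b
    by (simp add: y_def)
  have sum_y: "(\<Sum>p\<in>case_prod pt2 ` A. y p) = (\<Sum>q\<in>A. Y q)" for A
    by (simp only: sum.reindex[OF inj_pt2] comp_def) (simp add: split_def y_def)
  have "(\<Sum>p\<in>tri_grid 2 n. y p) \<le> total_weight w"
  proof (rule total_weight_ge_dual[OF _ order_refl cov])
    show "finite (tri_grid 2 n)"
      by (simp add: tri_grid_2_eq)
    show "0 \<le> y p" if "p \<in> tri_grid 2 n" for p
      using that nonneg by (auto simp: tri_grid_2_eq y_pt2)
    fix H assume "affine_hyperplane 2 H"
    then obtain a b where "\<exists>i<2. a i \<noteq> 0" and H: "H = {x \<in> rpoints 2. (\<Sum>i<2. a i * x i) = b}"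
      by (auto simp: affine_hyperplane_def)
    then have a: "a 0 \<noteq> 0 \<or> a 1 \<noteq> 0"
      by (auto simp: less_2_cases_iff)
    have "{p \<in> tri_grid 2 n. p \<in> H} = case_prod pt2 ` grid_line n (a 0) (a 1) b"
      by (auto simp: tri_grid_2_eq H sum_lessThan_2 grid_line_def)
    then show "(\<Sum>p\<in>{p \<in> tri_grid 2 n. p \<in> H}. y p) \<le> 1"
      using line[OF a] by (simp add: sum_y)
  qed
  then show ?thesis
    by (simp add: tri_grid_2_eq sum_y)
qed

section \<open>Covers by families of lines\<close>

definition hyperplane_comb ::
    "'i set \<Rightarrow> ('i \<Rightarrow> (nat \<Rightarrow> real) set) \<Rightarrow> ('i \<Rightarrow> real) \<Rightarrow> (nat \<Rightarrow> real) set \<Rightarrow> real" where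
  "hyperplane_comb I L c H = (\<Sum>i\<in>I. if L i = H then c i else 0)"

lemma wsupp_hyperplane_comb: "wsupp (hyperplane_comb I L c) \<subseteq> L ` I"
proof
  fix H assume "H \<in> wsupp (hyperplane_comb I L c)"
  then have "(\<Sum>i\<in>I. if L i = H then c i else 0) \<noteq> 0"
    by (simp add: wsupp_def hyperplane_comb_def)
  then obtain i where "i \<in> I" "(if L i = H then c i else 0) \<noteq> 0"
    by (rule sum.not_neutral_contains_not_neutral)
  then show "H \<in> L ` I"
    by (auto split: if_splits)
qed

lemma sum_wsupp_hyperplane_comb:
  assumes I: "finite I"
  shows "(\<Sum>H\<in>{H \<in> wsupp (hyperplane_comb I L c). P H}. hyperplane_comb I L c H) =
    (\<Sum>i\<in>{i\<in>I. P (L i)}. c i)"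
proof -
  let ?w = "hyperplane_comb I L c"
  have "{H \<in> wsupp ?w. P H} \<subseteq> {H \<in> L ` I. P H}"
    using wsupp_hyperplane_comb by blast
  moreover have "?w H = 0" if "H \<notin> wsupp ?w" for H
    using that by (simp add: wsupp_def)
  ultimately have "(\<Sum>H\<in>{H \<in> wsupp ?w. P H}. ?w H) = (\<Sum>H\<in>{H \<in> L ` I. P H}. ?w H)"
    using I by (intro sum.mono_neutral_left) auto
  also have "\<dots> = (\<Sum>i\<in>I. \<Sum>H\<in>{H \<in> L ` I. P H}. if L i = H then c i else 0)"
    unfolding hyperplane_comb_def by (rule sum.swap)
  also have "\<dots> = (\<Sum>i\<in>I. if P (L i) then c i else 0)"
    using I by (intro sum.cong) (auto simp: sum.delta)
  finally show ?thesis
    using I by (simp add: sum.inter_filter)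
qed

lemma frac_cover_hyperplane_comb:
  assumes I: "finite I" and c: "\<And>i. i \<in> I \<Longrightarrow> 0 \<le> c i"
    and L: "\<And>i. i \<in> I \<Longrightarrow> affine_hyperplane d (L i)"
    and covers: "\<And>p. p \<in> tri_grid d n \<Longrightarrow> 1 \<le> (\<Sum>i\<in>{i\<in>I. p \<in> L i}. c i)"
  shows "frac_cover d n (hyperplane_comb I L c)"
proof -
  let ?w = "hyperplane_comb I L c"
  have "finite (wsupp ?w)"
    using I by (rule finite_subset[OF wsupp_hyperplane_comb finite_imageI])
  moreover have "0 \<le> ?w H" for H
    unfolding hyperplane_comb_def using c by (intro sum_nonneg) auto
  moreover have "affine_hyperplane d H" if "H \<in> wsupp ?w" for H
    using wsupp_hyperplane_comb[of I L c] that L by blast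
  moreover have "1 \<le> (\<Sum>H\<in>{H \<in> wsupp ?w. p \<in> H}. ?w H)" if "p \<in> tri_grid d n" for p
    using sum_wsupp_hyperplane_comb[OF I, of L c "\<lambda>H. p \<in> H"] covers[OF that] by simp
  ultimately show ?thesis
    unfolding frac_cover_def by (intro conjI allI ballI)
qed

lemma total_weight_hyperplane_comb:
  "finite I \<Longrightarrow> total_weight (hyperplane_comb I L c) = sum c I"
  using sum_wsupp_hyperplane_comb[of I L c "\<lambda>_. True"] by (simp add: total_weight_def)

definition bary :: "nat \<Rightarrow> nat \<Rightarrow> nat \<times> nat \<Rightarrow> nat" where
  "bary S k q = (if k = 0 then fst q else if k = 1 then snd q else S - fst q - snd q)"

definition bary_line :: "nat \<Rightarrow> nat \<Rightarrow> nat \<Rightarrow> (nat \<Rightarrow> real) set" where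
  "bary_line S k t =
     {x \<in> rpoints 2. (if k = 0 then x 0 else if k = 1 then x 1 else real S - x 0 - x 1) = real t}"

lemma affine_hyperplane_2I:
  "a0 \<noteq> 0 \<or> a1 \<noteq> 0 \<Longrightarrow> affine_hyperplane 2 {x \<in> rpoints 2. a0 * x 0 + a1 * x 1 = b}"
  unfolding affine_hyperplane_def
  by (rule exI[of _ "\<lambda>i. if i = 0 then a0 else a1"], rule exI[of _ b]) (auto simp: sum_lessThan_2)

lemma affine_hyperplane_bary_line: "affine_hyperplane 2 (bary_line S k t)"
proof -
  consider "k = 0" | "k = 1" | "k \<noteq> 0" "k \<noteq> 1"
    by blast
  then show ?thesis
  proof cases
    case 1
    then have "bary_line S k t = {x \<in> rpoints 2. 1 * x 0 + 0 * x 1 = real t}"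
      by (simp add: bary_line_def)
    then show ?thesis
      using affine_hyperplane_2I[of 1 0 "real t"] by simp
  next
    case 2
    then have "bary_line S k t = {x \<in> rpoints 2. 0 * x 0 + 1 * x 1 = real t}"
      by (simp add: bary_line_def)
    then show ?thesis
      using affine_hyperplane_2I[of 0 1 "real t"] by simp
  next
    case 3
    then have "bary_line S k t = {x \<in> rpoints 2. 1 * x 0 + 1 * x 1 = real S - real t}"
      by (auto simp: bary_line_def)
    then show ?thesis
      using affine_hyperplane_2I[of 1 1 "real S - real t"] by simp
  qed
qed

lemma pt2_mem_bary_line:
  "a + b \<le> S \<Longrightarrow> pt2 a b \<in> bary_line S k t \<longleftrightarrow> bary S k (a, b) = t"
  by (auto simp: bary_line_def bary_def of_nat_diff)

lemma frac_cover_bary_lines: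
  fixes g :: "nat \<Rightarrow> real"
  assumes nonneg: "\<And>t. 0 \<le> g t"
    and covers: "\<And>a b. a + b \<le> S \<Longrightarrow> 1 \<le> g a + g b + g (S - a - b)"
  shows "\<exists>w. frac_cover 2 (S + 1) w \<and> total_weight w = 3 * (\<Sum>t\<le>S. g t)"
proof -
  define I where "I = {0, 1, 2::nat} \<times> {..S}"
  define L where "L i = bary_line S (fst i) (snd i)" for i
  define c where "c i = g (snd i)" for i :: "nat \<times> nat"
  have "frac_cover 2 (S + 1) (hyperplane_comb I L c)"
  proof (rule frac_cover_hyperplane_comb)
    fix p assume "p \<in> tri_grid 2 (S + 1)"
    then obtain a b where p: "p = pt2 a b" and ab: "a + b \<le> S"
      by (auto simp: tri_grid_2_eq tri_pairs_def)
    have "{i \<in> I. p \<in> L i} = {i \<in> I. bary S (fst i) (a, b) = snd i}"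
      using ab by (auto simp: L_def p pt2_mem_bary_line)
    also have "\<dots> = {(0, a), (1, b), (2, S - a - b)}"
      using ab by (auto simp: I_def bary_def)
    finally have "{i \<in> I. p \<in> L i} = {(0, a), (1, b), (2, S - a - b)}" .
    then show "1 \<le> (\<Sum>i\<in>{i \<in> I. p \<in> L i}. c i)"
      using covers[OF ab] by (simp add: c_def)
  qed (auto simp: I_def L_def c_def nonneg affine_hyperplane_bary_line)
  moreover have "sum c I = (\<Sum>k\<in>{0, 1, 2::nat}. \<Sum>t\<le>S. g t)"
    unfolding I_def c_def sum.cartesian_product by (simp add: split_def)
  then have "total_weight (hyperplane_comb I L c) = 3 * (\<Sum>t\<le>S. g t)"
    by (simp add: total_weight_hyperplane_comb I_def)
  ultimately show ?thesis
    by blast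
qed

lemma sum_ramp: "(\<Sum>t<M. real (M - t)) = real M * (real M + 1) / 2"
proof (induction M)
  case (Suc M)
  have "(\<Sum>t<M. real (Suc M - t)) = (\<Sum>t<M. real (M - t)) + real M"
    by (simp add: Suc_diff_le sum.distrib)
  then show ?case
    using Suc.IH by (simp add: field_simps)
qed simp

text \<open>Each line on which a barycentric coordinate equals \<open>t\<close> gets weight \<open>(M - t)\<^sub>+ / (3 M - S)\<close>;
  truncated subtraction on \<open>nat\<close> provides the positive part.\<close>

lemma fstar_le_ramp:
  assumes M: "M \<le> S + 1" "S < 3 * M"
  shows "fstar (S + 1) 2 \<le> 3 * real M * (real M + 1) / (2 * real (3 * M - S))"
proof -
  define g where "g t = real (M - t) / real (3 * M - S)" for t
  have "1 \<le> g a + g b + g (S - a - b)" if "a + b \<le> S" for a b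
  proof -
    have "3 * M - S \<le> (M - a) + (M - b) + (M - (S - a - b))"
      using that by linarith
    then have "real (3 * M - S) \<le> real (M - a) + real (M - b) + real (M - (S - a - b))"
      by linarith
    then show ?thesis
      using M by (simp add: g_def add_divide_distrib[symmetric])
  qed
  then obtain w where w: "frac_cover 2 (S + 1) w" "total_weight w = 3 * (\<Sum>t\<le>S. g t)"
    using frac_cover_bary_lines[of g S] by (auto simp: g_def)
  have "(\<Sum>t\<le>S. g t) = (\<Sum>t<M. real (M - t)) / real (3 * M - S)"
    unfolding g_def sum_divide_distrib[symmetric] using M
    by (intro arg_cong[where f = "\<lambda>x. x / _"] sum.mono_neutral_right) auto
  then have "total_weight w = 3 * (real M * (real M + 1) / 2 / real (3 * M - S))"
    using w(2) by (simp only: sum_ramp)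
  also have "\<dots> = 3 * real M * (real M + 1) / (2 * real (3 * M - S))"
    by simp
  finally show ?thesis
    using fstar_le_total_weight[OF w(1)] by simp
qed

section \<open>Dual solutions symmetric in the barycentric coordinates\<close>

definition two_separated :: "('a \<Rightarrow> nat) \<Rightarrow> 'a set \<Rightarrow> bool" where
  "two_separated f A \<longleftrightarrow> (\<forall>p\<in>A. \<forall>q\<in>A. p \<noteq> q \<longrightarrow> f p + 2 \<le> f q \<or> f q + 2 \<le> f p)"

lemma two_separatedI:
  "(\<And>p q. p \<in> A \<Longrightarrow> q \<in> A \<Longrightarrow> p \<noteq> q \<Longrightarrow> 2 \<le> \<bar>int (f q) - int (f p)\<bar>) \<Longrightarrow> two_separated f A"
  unfolding two_separated_def by fastforce

lemma card_two_separated_below: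
  assumes fin: "finite A" and sep: "two_separated f A" and below: "\<And>q. q \<in> A \<Longrightarrow> f q < 2 * k"
  shows "card A \<le> k"
proof -
  have "inj_on (\<lambda>q. f q div 2) A"
  proof (rule inj_onI, rule ccontr)
    fix p q assume "p \<in> A" "q \<in> A" "f p div 2 = f q div 2" "p \<noteq> q"
    with sep show False
      unfolding two_separated_def by fastforce
  qed
  moreover have "(\<lambda>q. f q div 2) ` A \<subseteq> {..<k}"
    using below by (auto intro: less_mult_imp_div_less simp: mult.commute)
  ultimately show ?thesis
    using card_inj_on_le[of _ A "{..<k}"] by fastforce
qed

lemma card_two_separated_level:
  assumes "finite A" and "two_separated f A"
  shows "card {q \<in> A. f q = c} \<le> 1"
proof -
  have "\<forall>p\<in>{q \<in> A. f q = c}. \<forall>q\<in>{q \<in> A. f q = c}. p = q"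
    using assms(2) unfolding two_separated_def by force
  then show ?thesis
    using card_le_Suc0_iff_eq[of "{q \<in> A. f q = c}"] assms(1) by simp
qed

lemma sum_two_separated_le:
  fixes Y :: "'a \<Rightarrow> real"
  assumes fin: "finite A" and sep: "two_separated f A"
    and supp: "\<And>q. q \<in> A \<Longrightarrow> Y q \<noteq> 0 \<Longrightarrow> f q \<le> 2 * k"
    and bound: "\<And>q. q \<in> A \<Longrightarrow> Y q \<le> \<beta>"
    and top: "\<And>q. q \<in> A \<Longrightarrow> f q = 2 * k \<Longrightarrow> Y q \<le> \<gamma>"
    and nonneg: "0 \<le> \<beta>" "0 \<le> \<gamma>"
  shows "sum Y A \<le> real k * \<beta> + \<gamma>"
proof -
  define B where "B = {q \<in> A. Y q \<noteq> 0 \<and> f q < 2 * k}"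
  define C where "C = {q \<in> A. f q = 2 * k}"
  have "sum Y A = sum Y (B \<union> C)"
    using fin supp by (intro sum.mono_neutral_right) (auto simp: B_def C_def le_less)
  also have "\<dots> = sum Y B + sum Y C"
    using fin by (intro sum.union_disjoint) (auto simp: B_def C_def)
  also have "sum Y B \<le> real k * \<beta>"
  proof -
    have "card B \<le> k"
      using fin sep by (intro card_two_separated_below[of B f])
        (auto simp: B_def two_separated_def)
    then have "real (card B) * \<beta> \<le> real k * \<beta>"
      using nonneg by (intro mult_right_mono) auto
    then show ?thesis
      using sum_bounded_above[of B Y \<beta>] bound by (force simp: B_def)
  qed
  also have "sum Y C \<le> \<gamma>"
  proof -
    have "card C \<le> 1"
      unfolding C_def by (rule card_two_separated_level[OF fin sep])
    then have "real (card C) * \<gamma> \<le> \<gamma>"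
      using nonneg mult_right_mono[of "real (card C)" 1 \<gamma>] by simp
    then show ?thesis
      using sum_bounded_above[of C Y \<gamma>] top by (force simp: C_def)
  qed
  finally show ?thesis
    by simp
qed

lemma abs_ge_2_of_shallow_direction:
  fixes c0 c1 :: real and dx dy :: int
  assumes line: "c0 * dx + c1 * dy = 0" and nonzero: "dx \<noteq> 0 \<or> dy \<noteq> 0"
    and c: "c0 \<noteq> 0" "\<bar>c0\<bar> < \<bar>c1\<bar>"
  shows "2 \<le> \<bar>dx\<bar>"
proof -
  have "dy \<noteq> 0"
    using line nonzero c(1) by auto
  then have "1 \<le> \<bar>real_of_int dy\<bar>"
    by linarith
  then have "\<bar>c1\<bar> \<le> \<bar>c1\<bar> * \<bar>real_of_int dy\<bar>"
    using mult_left_mono[of 1 _ "\<bar>c1\<bar>"] by simp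
  also have "\<dots> = \<bar>c0\<bar> * \<bar>real_of_int dx\<bar>"
  proof -
    have "c1 * dy = - (c0 * dx)"
      using line by linarith
    then show ?thesis
      by (metis abs_minus_cancel abs_mult)
  qed
  finally have "\<bar>c0\<bar> * 1 < \<bar>c0\<bar> * \<bar>real_of_int dx\<bar>"
    using c(2) by linarith
  then show ?thesis
    using c(1) by (simp add: mult_less_cancel_left_pos)
qed

lemma grid_line_diff:
  assumes "p \<in> grid_line n c0 c1 \<beta>" and "q \<in> grid_line n c0 c1 \<beta>"
  shows "c0 * (int (fst q) - int (fst p)) + c1 * (int (snd q) - int (snd p)) = 0"
  using assms by (simp add: grid_line_def algebra_simps)

lemma grid_line_bary_const:
  assumes "c1 = 0 \<and> c0 \<noteq> 0 \<or> c0 = 0 \<and> c1 \<noteq> 0 \<or> c0 = c1 \<and> c0 \<noteq> 0"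
  shows "\<exists>k\<in>{0, 1, 2}. \<forall>p\<in>grid_line (S + 1) c0 c1 \<beta>. \<forall>q\<in>grid_line (S + 1) c0 c1 \<beta>.
    bary S k p = bary S k q"
proof -
  let ?L = "grid_line (S + 1) c0 c1 \<beta>"
  from assms consider "c1 = 0" "c0 \<noteq> 0" | "c0 = 0" "c1 \<noteq> 0" | "c0 = c1" "c0 \<noteq> 0"
    by blast
  then show ?thesis
  proof cases
    case 1
    then have "bary S 0 p = bary S 0 q" if "p \<in> ?L" "q \<in> ?L" for p q
      using grid_line_diff[OF that] by (simp add: bary_def)
    then show ?thesis
      by blast
  next
    case 2
    then have "bary S 1 p = bary S 1 q" if "p \<in> ?L" "q \<in> ?L" for p q
      using grid_line_diff[OF that] by (simp add: bary_def)
    then show ?thesis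
      by blast
  next
    case 3
    have "bary S 2 p = bary S 2 q" if "p \<in> ?L" "q \<in> ?L" for p q
    proof -
      have "c0 * (int (fst q) - int (fst p) + (int (snd q) - int (snd p))) = 0"
        using grid_line_diff[OF that] 3 by (simp add: distrib_left)
      then have "int (fst q) - int (fst p) + (int (snd q) - int (snd p)) = 0"
        using 3 by (metis mult_eq_0_iff of_int_eq_0_iff)
      then show ?thesis
        by (simp add: bary_def)
    qed
    then show ?thesis
      by blast
  qed
qed

lemma grid_line_diagonal_two_separated:
  assumes "c0 = - c1" and "c0 \<noteq> 0"
  shows "two_separated (bary S 2) (grid_line (S + 1) c0 c1 \<beta>)"
proof (rule two_separatedI)
  fix p q assume pq: "p \<in> grid_line (S + 1) c0 c1 \<beta>" "q \<in> grid_line (S + 1) c0 c1 \<beta>" "p \<noteq> q"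
  have "c0 * ((int (fst q) - int (fst p)) - (int (snd q) - int (snd p))) = 0"
    using grid_line_diff[OF pq(1,2)] assms(1) by (simp add: algebra_simps)
  then have diag: "int (fst q) - int (fst p) = int (snd q) - int (snd p)"
    using assms(2) by simp
  with pq(3) have nonzero: "int (fst q) - int (fst p) \<noteq> 0"
    by (auto simp: prod_eq_iff)
  have "fst p + snd p \<le> S" "fst q + snd q \<le> S"
    using pq(1,2) by (auto simp: grid_line_def tri_pairs_def)
  then have "int (bary S 2 q) - int (bary S 2 p) = - 2 * (int (fst q) - int (fst p))"
    using diag by (simp add: bary_def of_nat_diff)
  then show "2 \<le> \<bar>int (bary S 2 q) - int (bary S 2 p)\<bar>"
    using nonzero by (simp add: abs_mult)
qed

lemma grid_line_two_separated:
  assumes c: "c0 \<noteq> 0" "c1 \<noteq> 0" "c0 \<noteq> c1"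
  shows "\<exists>k\<in>{0, 1, 2}. two_separated (bary S k) (grid_line (S + 1) c0 c1 \<beta>)"
proof -
  let ?L = "grid_line (S + 1) c0 c1 \<beta>"
  have distinct: "int (fst q) - int (fst p) \<noteq> 0 \<or> int (snd q) - int (snd p) \<noteq> 0" if "p \<noteq> q" for p q
    using that by (auto simp: prod_eq_iff)
  consider "\<bar>c0\<bar> < \<bar>c1\<bar>" | "\<bar>c1\<bar> < \<bar>c0\<bar>" | "c0 = - c1"
    using c by argo
  then show ?thesis
  proof cases
    case 1
    have "two_separated (bary S 0) ?L"
    proof (rule two_separatedI)
      fix p q assume pq: "p \<in> ?L" "q \<in> ?L" "p \<noteq> q"
      show "2 \<le> \<bar>int (bary S 0 q) - int (bary S 0 p)\<bar>"
        using abs_ge_2_of_shallow_direction[OF grid_line_diff[OF pq(1,2)] distinct[OF pq(3)] c(1) 1]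
        by (simp add: bary_def)
    qed
    then show ?thesis
      by blast
  next
    case 2
    have "two_separated (bary S 1) ?L"
    proof (rule two_separatedI)
      fix p q assume pq: "p \<in> ?L" "q \<in> ?L" "p \<noteq> q"
      have "c1 * (int (snd q) - int (snd p)) + c0 * (int (fst q) - int (fst p)) = 0"
        using grid_line_diff[OF pq(1,2)] by simp
      then have "2 \<le> \<bar>int (snd q) - int (snd p)\<bar>"
        using abs_ge_2_of_shallow_direction[OF _ _ c(2) 2] distinct[OF pq(3)] by blast
      then show "2 \<le> \<bar>int (bary S 1 q) - int (bary S 1 p)\<bar>"
        by (simp add: bary_def)
    qed
    then show ?thesis
      by blast
  next
    case 3
    then show ?thesis
      using grid_line_diagonal_two_separated c(1) by blast
  qed
qed

definition sym3 :: "(nat \<Rightarrow> nat \<Rightarrow> nat \<Rightarrow> real) \<Rightarrow> bool" where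
  "sym3 F \<longleftrightarrow> (\<forall>x y z. F x y z = F y x z \<and> F x y z = F x z y)"

definition pair_weight :: "nat \<Rightarrow> (nat \<Rightarrow> nat \<Rightarrow> nat \<Rightarrow> real) \<Rightarrow> nat \<times> nat \<Rightarrow> real" where
  "pair_weight S F q = F (fst q) (snd q) (S - fst q - snd q)"

lemma sym3_rotate: "sym3 F \<Longrightarrow> F x y z = F z x y"
  unfolding sym3_def by metis

lemma pair_weight_bary:
  assumes sym: "sym3 F" and k: "k \<in> {0, 1, 2}" and q: "fst q + snd q \<le> S"
  shows "\<exists>y z. bary S k q + y + z = S \<and> pair_weight S F q = F (bary S k q) y z"
proof -
  have "k = 0 \<or> k = 1 \<or> k = 2"
    using k by blast
  then show ?thesis
  proof (elim disjE)
    assume "k = 0"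
    then show ?thesis
      using q by (intro exI[of _ "snd q"] exI[of _ "S - fst q - snd q"])
        (auto simp: bary_def pair_weight_def)
  next
    assume "k = 1"
    then show ?thesis
      using sym q by (intro exI[of _ "fst q"] exI[of _ "S - fst q - snd q"])
        (auto simp: bary_def pair_weight_def sym3_def)
  next
    assume "k = 2"
    then show ?thesis
      using sym3_rotate[OF sym] q by (intro exI[of _ "fst q"] exI[of _ "snd q"])
        (auto simp: bary_def pair_weight_def)
  qed
qed

lemma sum_level_pair_weight:
  assumes sym: "sym3 F" and k: "k \<in> {0, 1, 2}" and t: "t \<le> S"
  shows "(\<Sum>q\<in>{q \<in> tri_pairs (S + 1). bary S k q = t}. pair_weight S F q) = (\<Sum>b\<le>S - t. F t b (S - t - b))"
proof -
  define \<sigma> where "\<sigma> b = (if k = 0 then (t, b) else if k = 1 then (b, t) else (S - t - b, b))" for b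
  have "inj_on \<sigma> {..S - t}"
    by (auto simp: inj_on_def \<sigma>_def split: if_splits)
  moreover have "{q \<in> tri_pairs (S + 1). bary S k q = t} = \<sigma> ` {..S - t}"
  proof (intro equalityI subsetI)
    fix q assume "q \<in> {q \<in> tri_pairs (S + 1). bary S k q = t}"
    then have "fst q + snd q \<le> S" "bary S k q = t"
      by (auto simp: tri_pairs_def)
    then show "q \<in> \<sigma> ` {..S - t}"
      using k by (cases q) (auto simp: bary_def \<sigma>_def image_iff)
  qed (use k t in \<open>auto simp: tri_pairs_def bary_def \<sigma>_def\<close>)
  moreover have "pair_weight S F (\<sigma> b) = F t b (S - t - b)" if "b \<le> S - t" for b
  proof -
    have "S - (S - t - b) - b = t" "S - b - t = S - t - b"
      using that t by auto
    moreover have "F (S - t - b) b t = F t b (S - t - b)" "F b t (S - t - b) = F t b (S - t - b)"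
      using sym sym3_rotate[OF sym, of t b "S - t - b"] unfolding sym3_def by metis+
    ultimately show ?thesis
      using k by (auto simp: \<sigma>_def pair_weight_def)
  qed
  ultimately show ?thesis
    by (simp add: sum.reindex)
qed

lemma sum_pair_weight:
  "(\<Sum>q\<in>tri_pairs (S + 1). pair_weight S F q) = (\<Sum>t\<le>S. \<Sum>b\<le>S - t. F t b (S - t - b))"
proof -
  have "tri_pairs (S + 1) = Sigma {..S} (\<lambda>t. {..S - t})"
    by (auto simp: tri_pairs_def)
  then show ?thesis
    by (simp add: sum.Sigma split_def pair_weight_def)
qed

lemma line_sum_pair_weight_le:
  assumes sym: "sym3 F" and nonneg: "\<And>x y z. 0 \<le> F x y z"
    and level: "\<And>t. t \<le> S \<Longrightarrow> (\<Sum>b\<le>S - t. F t b (S - t - b)) \<le> 1"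
    and separated: "\<And>k A. k \<in> {0, 1, 2} \<Longrightarrow> A \<subseteq> tri_pairs (S + 1) \<Longrightarrow>
      two_separated (bary S k) A \<Longrightarrow> sum (pair_weight S F) A \<le> 1"
    and c: "c0 \<noteq> 0 \<or> c1 \<noteq> 0"
  shows "sum (pair_weight S F) (grid_line (S + 1) c0 c1 \<beta>) \<le> 1"
proof -
  let ?L = "grid_line (S + 1) c0 c1 \<beta>"
  have L: "?L \<subseteq> tri_pairs (S + 1)"
    by (auto simp: grid_line_def)
  show ?thesis
  proof (cases "c0 \<noteq> 0 \<and> c1 \<noteq> 0 \<and> c0 \<noteq> c1")
    case True
    then show ?thesis
      using grid_line_two_separated[of c0 c1 S \<beta>] separated L by blast
  next
    case False
    then obtain k where k: "k \<in> {0, 1, 2}" and const: "\<forall>p\<in>?L. \<forall>q\<in>?L. bary S k p = bary S k q"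
      using grid_line_bary_const[of c1 c0 S \<beta>] c by blast
    show ?thesis
    proof (cases "?L = {}")
      case False
      then obtain q0 where q0: "q0 \<in> ?L"
        by blast
      define t where "t = bary S k q0"
      have "t \<le> S"
        using q0 by (auto simp: t_def bary_def grid_line_def tri_pairs_def)
      have "?L \<subseteq> {q \<in> tri_pairs (S + 1). bary S k q = t}"
        using const q0 L unfolding t_def by blast
      then have "sum (pair_weight S F) ?L \<le> (\<Sum>q\<in>{q \<in> tri_pairs (S + 1). bary S k q = t}. pair_weight S F q)"
        using nonneg by (intro sum_mono2) (auto simp: pair_weight_def)
      also have "\<dots> \<le> 1"
        using level[OF \<open>t \<le> S\<close>] sum_level_pair_weight[OF sym k \<open>t \<le> S\<close>] by simp
      finally show ?thesis .
    qed simp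
  qed
qed

lemma sum_two_separated_pair_weight_le:
  assumes sym: "sym3 F"
    and supp: "\<And>x y z. x + y + z = S \<Longrightarrow> F x y z \<noteq> 0 \<Longrightarrow> x \<le> 2 * m"
    and bound: "\<And>x y z. x + y + z = S \<Longrightarrow> F x y z \<le> \<beta>"
    and top: "\<And>y z. 2 * m + y + z = S \<Longrightarrow> F (2 * m) y z \<le> \<gamma>"
    and nonneg: "0 \<le> \<beta>" "0 \<le> \<gamma>"
    and k: "k \<in> {0, 1, 2}" and A: "A \<subseteq> tri_pairs (S + 1)" and sep: "two_separated (bary S k) A"
  shows "sum (pair_weight S F) A \<le> real m * \<beta> + \<gamma>"
proof (rule sum_two_separated_le[OF _ sep _ _ _ nonneg])
  show "finite A"
    using A by (rule finite_subset) simp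
  fix q assume "q \<in> A"
  then have "fst q + snd q \<le> S"
    using A by (auto simp: tri_pairs_def)
  then obtain y z where yz: "bary S k q + y + z = S" "pair_weight S F q = F (bary S k q) y z"
    using pair_weight_bary[OF sym k] by blast
  show "pair_weight S F q \<noteq> 0 \<Longrightarrow> bary S k q \<le> 2 * m"
    using supp[OF yz(1)] yz(2) by simp
  show "pair_weight S F q \<le> \<beta>"
    using bound[OF yz(1)] yz(2) by simp
  show "bary S k q = 2 * m \<Longrightarrow> pair_weight S F q \<le> \<gamma>"
    using top yz by simp
qed

text \<open>A line parallel to a side of the triangle lies in a level set of a barycentric coordinate,
  which by symmetry carries the weight of a level set of \<open>F\<close>'s first argument. Any other line meets
  at most \<open>m\<close> grid points with the separated coordinate below \<open>2 m\<close> and at most one with it equal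
  to \<open>2 m\<close>.\<close>

lemma fstar_ge_symmetric_dual:
  assumes sym: "sym3 F" and nonneg: "\<And>x y z. 0 \<le> F x y z"
    and level: "\<And>t. t \<le> S \<Longrightarrow> (\<Sum>b\<le>S - t. F t b (S - t - b)) \<le> 1"
    and supp: "\<And>x y z. x + y + z = S \<Longrightarrow> F x y z \<noteq> 0 \<Longrightarrow> x \<le> 2 * m"
    and bound: "\<And>x y z. x + y + z = S \<Longrightarrow> F x y z \<le> \<beta>"
    and top: "\<And>y z. 2 * m + y + z = S \<Longrightarrow> F (2 * m) y z \<le> \<gamma>"
    and weights: "0 \<le> \<beta>" "0 \<le> \<gamma>" "real m * \<beta> + \<gamma> \<le> 1"
  shows "(\<Sum>t\<le>S. \<Sum>b\<le>S - t. F t b (S - t - b)) \<le> fstar (S + 1) 2"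
proof -
  have separated: "sum (pair_weight S F) A \<le> 1"
    if "k \<in> {0, 1, 2}" "A \<subseteq> tri_pairs (S + 1)" "two_separated (bary S k) A" for k A
  proof -
    have "sum (pair_weight S F) A \<le> real m * \<beta> + \<gamma>"
      by (rule sum_two_separated_pair_weight_le[where m = m]) (fact sym supp bound top weights that)+
    then show ?thesis
      using weights(3) by linarith
  qed
  obtain w0 where "frac_cover 2 (S + 1) w0"
    using frac_cover_bary_lines[of "\<lambda>_. 1" S] by auto
  then show ?thesis
  proof (rule fstar_ge)
    fix w assume w: "frac_cover 2 (S + 1) w"
    have "(\<Sum>q\<in>tri_pairs (S + 1). pair_weight S F q) \<le> total_weight w"
    proof (rule total_weight_ge_pair_dual[OF w])
      show "0 \<le> pair_weight S F q" for q
        by (simp add: pair_weight_def nonneg)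
      show "sum (pair_weight S F) (grid_line (S + 1) c0 c1 \<beta>') \<le> 1"
        if "c0 \<noteq> 0 \<or> c1 \<noteq> 0" for c0 c1 \<beta>'
        by (rule line_sum_pair_weight_le[OF sym nonneg level separated that])
    qed
    then show "(\<Sum>t\<le>S. \<Sum>b\<le>S - t. F t b (S - t - b)) \<le> total_weight w"
      by (simp only: sum_pair_weight)
  qed
qed

section \<open>Dual weights of the form \<open>(u x + u y + u z) / D\<close>\<close>

lemma sorted_triple_wlog:
  fixes P :: "nat \<Rightarrow> nat \<Rightarrow> nat \<Rightarrow> bool"
  assumes "\<And>x y z. P x y z \<Longrightarrow> P y x z" and "\<And>x y z. P x y z \<Longrightarrow> P x z y"
    and "\<And>x y z. x \<le> y \<Longrightarrow> y \<le> z \<Longrightarrow> P x y z"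
  shows "P x y z"
  using assms nat_le_linear by metis

lemma double_sum_affine:
  fixes \<alpha> \<beta> :: int
  assumes "p \<le> q" and "\<And>c. p \<le> c \<Longrightarrow> c < q \<Longrightarrow> u c = \<alpha> * int c + \<beta>"
  shows "2 * (\<Sum>c\<in>{p..<q}. u c) = (int q - int p) * (\<alpha> * (int p + int q - 1) + 2 * \<beta>)"
  using assms
proof (induction q)
  case (Suc q)
  show ?case
  proof (cases "p = Suc q")
    case False
    then have "2 * (\<Sum>c\<in>{p..<q}. u c) = (int q - int p) * (\<alpha> * (int p + int q - 1) + 2 * \<beta>)"
      using Suc by simp
    then show ?thesis
      using Suc.prems False by (simp add: algebra_simps)
  qed simp
qed simp

lemma sum_window_triple:
  fixes u :: "nat \<Rightarrow> 'a::comm_ring_1"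
  assumes "m + 1 = lo + hi" and "lo \<le> hi"
  shows "(\<Sum>b\<in>{lo..<hi}. u t + u b + u (m - b)) = of_nat (hi - lo) * u t + 2 * (\<Sum>b\<in>{lo..<hi}. u b)"
proof -
  have "(\<Sum>b\<in>{lo..<hi}. u (m - b)) = (\<Sum>b\<in>{lo..<hi}. u (m - (hi + lo - Suc b)))"
    by (rule sum.atLeastLessThan_rev)
  also have "\<dots> = (\<Sum>b\<in>{lo..<hi}. u b)"
  proof (rule sum.cong[OF refl])
    fix b assume "b \<in> {lo..<hi}"
    then have "m - (hi + lo - Suc b) = b"
      using assms(1) by auto
    then show "u (m - (hi + lo - Suc b)) = u b"
      by simp
  qed
  finally have "(\<Sum>b\<in>{lo..<hi}. u (m - b)) = (\<Sum>b\<in>{lo..<hi}. u b)" .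
  then show ?thesis
    by (simp add: sum.distrib flip: mult_2)
qed

lemma sum_line_values:
  fixes v :: "nat \<Rightarrow> real"
  assumes "M \<le> S" and "\<And>t. t \<le> S \<Longrightarrow> v t = (if t < M then 1 else if t = M then \<alpha> else 0)"
  shows "(\<Sum>t\<le>S. v t) = real M + \<alpha>"
proof -
  have "(\<Sum>t\<le>S. v t) = (\<Sum>t\<le>S. (if t < M then 1 else 0) + (if t = M then \<alpha> else 0))"
    using assms(2) by (intro sum.cong) auto
  also have "\<dots> = (\<Sum>t<M. 1) + \<alpha>"
    using assms(1) by (simp add: sum.distrib sum.If_cases Int_absorb1 subset_eq)
  finally show ?thesis
    by simp
qed

definition tri_dual :: "nat \<Rightarrow> real \<Rightarrow> (nat \<Rightarrow> int) \<Rightarrow> nat \<Rightarrow> nat \<Rightarrow> nat \<Rightarrow> real" where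
  "tri_dual M D u x y z =
     (if x \<le> M \<and> y \<le> M \<and> z \<le> M then real_of_int (u x + u y + u z) / D else 0)"

lemma sym3_tri_dual: "sym3 (tri_dual M D u)"
  unfolding sym3_def tri_dual_def by (simp add: ac_simps conj_ac)

lemma tri_dual_nonneg: "(\<And>c. 0 \<le> u c) \<Longrightarrow> 0 < D \<Longrightarrow> 0 \<le> tri_dual M D u x y z"
  unfolding tri_dual_def by (simp add: add_nonneg_nonneg)

lemma tri_dual_le:
  assumes "0 < D" and "x \<le> M \<Longrightarrow> y \<le> M \<Longrightarrow> z \<le> M \<Longrightarrow> u x + u y + u z \<le> B" and "0 \<le> B"
  shows "tri_dual M D u x y z \<le> real_of_int B / D"
  using assms by (auto simp: tri_dual_def divide_right_mono)

lemma line_sum_tri_dual: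
  assumes "t \<le> M" and W: "{b. b \<le> S - t \<and> b \<le> M \<and> S - t - b \<le> M} = {lo..<hi}"
    and "S - t + 1 = lo + hi" "lo \<le> hi"
  shows "(\<Sum>b\<le>S - t. tri_dual M D u t b (S - t - b)) =
    real_of_int (int (hi - lo) * u t + 2 * (\<Sum>b\<in>{lo..<hi}. u b)) / D"
proof -
  have "(\<Sum>b\<le>S - t. tri_dual M D u t b (S - t - b)) =
      (\<Sum>b\<in>{b \<in> {..S - t}. b \<le> M \<and> S - t - b \<le> M}. real_of_int (u t + u b + u (S - t - b)) / D)"
    using \<open>t \<le> M\<close> by (subst sum.inter_filter) (simp_all add: tri_dual_def cong: if_cong)
  also have "{b \<in> {..S - t}. b \<le> M \<and> S - t - b \<le> M} = {lo..<hi}"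
    using W by auto
  also have "(\<Sum>b\<in>{lo..<hi}. real_of_int (u t + u b + u (S - t - b)) / D) =
      real_of_int (\<Sum>b\<in>{lo..<hi}. u t + u b + u (S - t - b)) / D"
    by (simp only: of_int_sum sum_divide_distrib)
  also have "(\<Sum>b\<in>{lo..<hi}. u t + u b + u (S - t - b)) = int (hi - lo) * u t + 2 * (\<Sum>b\<in>{lo..<hi}. u b)"
    using sum_window_triple[of "S - t" lo hi u t] assms(3,4) by simp
  finally show ?thesis .
qed

lemma line_sum_tri_dual_out: "M < t \<Longrightarrow> (\<Sum>b\<le>S - t. tri_dual M D u t b (S - t - b)) = 0"
  by (simp add: tri_dual_def)

section \<open>The case \<open>n = 3 j + 2\<close>\<close>

definition dual_weight_a :: "nat \<Rightarrow> nat \<Rightarrow> int" where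
  "dual_weight_a j c =
     (if c \<le> j then (2 * int j + 1) * (3 * int j + 1 - 3 * int c)
      else if c \<le> 2 * j then (int j + 1) * (3 * int c - 3 * int j - 1) else 0)"

lemma dual_weight_a_nonneg: "0 \<le> dual_weight_a j c"
  by (simp add: dual_weight_a_def)

lemma dual_weight_a_low: "c \<le> j \<Longrightarrow> dual_weight_a j c = (2 * int j + 1) * (3 * int j + 1 - 3 * int c)"
  and dual_weight_a_mid: "j < c \<Longrightarrow> c \<le> 2 * j \<Longrightarrow> dual_weight_a j c = (int j + 1) * (3 * int c - 3 * int j - 1)"
  and dual_weight_a_top: "2 * j < c \<Longrightarrow> dual_weight_a j c = 0"
  by (simp_all add: dual_weight_a_def)

lemma dual_weight_a_pair:
  assumes "y + z = j"
  shows "dual_weight_a j y + dual_weight_a j z = (2 * int j + 1) * (3 * int j + 2)"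
proof -
  have "y \<le> j" "z \<le> j" and z: "int z = int j - int y"
    using assms by auto
  show ?thesis
    unfolding dual_weight_a_low[OF \<open>y \<le> j\<close>] dual_weight_a_low[OF \<open>z \<le> j\<close>] z
    by (simp add: algebra_simps)
qed

lemma dual_weight_a_sorted_triple:
  assumes sorted: "x \<le> y" "y \<le> z" and sum: "x + y + z = 3 * j + 1" and "z \<le> 2 * j + 1"
  shows "dual_weight_a j x + dual_weight_a j y + dual_weight_a j z \<le> (3 * int j + 2)\<^sup>2"
proof -
  let ?u = "dual_weight_a j"
  have "x \<le> j"
    using sorted sum by linarith
  consider "y \<le> j" "z = 2 * j + 1" | "y \<le> j" "z \<le> 2 * j" | "j < y" "z \<le> 2 * j"
    using sorted sum \<open>z \<le> 2 * j + 1\<close> by linarith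
  then show ?thesis
  proof cases
    case 1
    then have "x + y = j" "?u z = 0"
      using sum by (simp_all add: dual_weight_a_top)
    then have "?u x + ?u y + ?u z = (2 * int j + 1) * (3 * int j + 2)"
      using dual_weight_a_pair[of x y j] by simp
    also have "\<dots> \<le> (3 * int j + 2)\<^sup>2"
      by (simp add: power2_eq_square mult_right_mono)
    finally show ?thesis .
  next
    case 2
    have "j < z"
      using sum sorted 2 by linarith
    have x: "int x = 3 * int j + 1 - int y - int z"
      using sum by simp
    have "?u x + ?u y + ?u z = (3 * int j + 2) * (3 * int z - 3 * int j - 1)"
      unfolding dual_weight_a_low[OF \<open>x \<le> j\<close>] dual_weight_a_low[OF \<open>y \<le> j\<close>]
        dual_weight_a_mid[OF \<open>j < z\<close> \<open>z \<le> 2 * j\<close>] x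
      by (simp add: algebra_simps)
    also have "\<dots> \<le> (3 * int j + 2)\<^sup>2"
      using \<open>z \<le> 2 * j\<close> by (simp add: power2_eq_square mult_left_mono)
    finally show ?thesis .
  next
    case 3
    have "j < z" "y \<le> 2 * j"
      using sorted 3 by linarith+
    have y: "int y = 3 * int j + 1 - int x - int z"
      using sum by simp
    have "?u x + ?u y + ?u z = (3 * int j + 2) * (3 * int j + 1 - 3 * int x)"
      unfolding dual_weight_a_low[OF \<open>x \<le> j\<close>] dual_weight_a_mid[OF \<open>j < y\<close> \<open>y \<le> 2 * j\<close>]
        dual_weight_a_mid[OF \<open>j < z\<close> \<open>z \<le> 2 * j\<close>] y
      by (simp add: algebra_simps)
    also have "\<dots> \<le> (3 * int j + 2)\<^sup>2"
      by (simp add: power2_eq_square mult_left_mono)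
    finally show ?thesis .
  qed
qed

lemma double_sum_dual_weight_a_low:
  "p \<le> q \<Longrightarrow> q \<le> j + 1 \<Longrightarrow> 2 * (\<Sum>c\<in>{p..<q}. dual_weight_a j c) =
    (int q - int p) * (- 3 * (2 * int j + 1) * (int p + int q - 1) + 2 * ((2 * int j + 1) * (3 * int j + 1)))"
  by (rule double_sum_affine) (auto simp: dual_weight_a_low algebra_simps)

lemma double_sum_dual_weight_a_mid:
  "j < p \<Longrightarrow> p \<le> q \<Longrightarrow> q \<le> 2 * j + 1 \<Longrightarrow> 2 * (\<Sum>c\<in>{p..<q}. dual_weight_a j c) =
    (int q - int p) * (3 * (int j + 1) * (int p + int q - 1) + 2 * (- (int j + 1) * (3 * int j + 1)))"
  by (rule double_sum_affine) (auto simp: dual_weight_a_mid algebra_simps)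

text \<open>The numerators of the line sums of \<open>dual_a\<close>, in the form \<open>line_sum_tri_dual\<close> produces them
  (hence the \<open>- 0\<close> when the window starts at \<open>0\<close>).\<close>

lemma window_dual_weight_a_low:
  assumes "t \<le> j"
  shows "int (2 * j + 2 - (j - t)) * dual_weight_a j t + 2 * (\<Sum>b\<in>{j - t..<2 * j + 2}. dual_weight_a j b) =
    (int j + 1) * (3 * int j + 2)\<^sup>2"
proof -
  have "(\<Sum>b\<in>{j - t..<2 * j + 2}. dual_weight_a j b) =
      (\<Sum>b\<in>{j - t..<j + 1}. dual_weight_a j b) + (\<Sum>b\<in>{j + 1..<2 * j + 2}. dual_weight_a j b)"
    by (rule sum.atLeastLessThan_concat[symmetric]) auto
  also have "(\<Sum>b\<in>{j + 1..<2 * j + 2}. dual_weight_a j b) =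
      (\<Sum>b\<in>{j + 1..<2 * j + 1}. dual_weight_a j b) + (\<Sum>b\<in>{2 * j + 1..<2 * j + 2}. dual_weight_a j b)"
    by (rule sum.atLeastLessThan_concat[symmetric]) auto
  finally have split: "2 * (\<Sum>b\<in>{j - t..<2 * j + 2}. dual_weight_a j b) =
      2 * (\<Sum>b\<in>{j - t..<j + 1}. dual_weight_a j b) + 2 * (\<Sum>b\<in>{j + 1..<2 * j + 1}. dual_weight_a j b)"
    by (simp add: dual_weight_a_top)
  have low: "j - t \<le> j + 1" "j + 1 \<le> j + 1" and mid: "j < j + 1" "j + 1 \<le> 2 * j + 1" "2 * j + 1 \<le> 2 * j + 1"
    by auto
  have "int (2 * j + 2 - (j - t)) = int j + 2 + int t" "int (j - t) = int j - int t"
    using assms by auto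
  then show ?thesis
    unfolding split double_sum_dual_weight_a_low[OF low] double_sum_dual_weight_a_mid[OF mid]
      dual_weight_a_low[OF assms]
    by (simp add: algebra_simps power2_eq_square)
qed

lemma window_dual_weight_a_mid:
  assumes "j < t" "t \<le> 2 * j"
  shows "int (3 * j + 2 - t - 0) * dual_weight_a j t + 2 * (\<Sum>b\<in>{0..<3 * j + 2 - t}. dual_weight_a j b) =
    (int j + 1) * (3 * int j + 2)\<^sup>2"
proof -
  have "(\<Sum>b\<in>{0..<3 * j + 2 - t}. dual_weight_a j b) =
      (\<Sum>b\<in>{0..<j + 1}. dual_weight_a j b) + (\<Sum>b\<in>{j + 1..<3 * j + 2 - t}. dual_weight_a j b)"
    using assms by (intro sum.atLeastLessThan_concat[symmetric]) auto
  then have split: "2 * (\<Sum>b\<in>{0..<3 * j + 2 - t}. dual_weight_a j b) =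
      2 * (\<Sum>b\<in>{0..<j + 1}. dual_weight_a j b) + 2 * (\<Sum>b\<in>{j + 1..<3 * j + 2 - t}. dual_weight_a j b)"
    by simp
  have mid: "j < j + 1" "j + 1 \<le> 3 * j + 2 - t" "3 * j + 2 - t \<le> 2 * j + 1"
    using assms by auto
  have "int (3 * j + 2 - t - 0) = 3 * int j + 2 - int t" "int (3 * j + 2 - t) = 3 * int j + 2 - int t"
    using assms by auto
  then show ?thesis
    unfolding split double_sum_dual_weight_a_low[of 0 "j + 1" j, OF le0 order_refl]
      double_sum_dual_weight_a_mid[OF mid] dual_weight_a_mid[OF assms]
    by (simp add: algebra_simps power2_eq_square)
qed

lemma window_dual_weight_a_top:
  "int (j + 1 - 0) * dual_weight_a j (2 * j + 1) + 2 * (\<Sum>b\<in>{0..<j + 1}. dual_weight_a j b) =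
    (2 * int j + 1) * (int j + 1) * (3 * int j + 2)"
  unfolding double_sum_dual_weight_a_low[of 0 "j + 1" j, OF le0 order_refl]
  by (simp add: dual_weight_a_top algebra_simps)

definition dual_a :: "nat \<Rightarrow> nat \<Rightarrow> nat \<Rightarrow> nat \<Rightarrow> real" where
  "dual_a j = tri_dual (2 * j + 1) ((real j + 1) * (3 * real j + 2)\<^sup>2) (dual_weight_a j)"

lemma line_sum_dual_a_low:
  assumes "t \<le> j"
  shows "(\<Sum>b\<le>3 * j + 1 - t. dual_a j t b (3 * j + 1 - t - b)) = 1"
proof -
  have W: "{b. b \<le> 3 * j + 1 - t \<and> b \<le> 2 * j + 1 \<and> 3 * j + 1 - t - b \<le> 2 * j + 1} = {j - t..<2 * j + 2}"
    using assms by auto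
  have "(\<Sum>b\<le>3 * j + 1 - t. dual_a j t b (3 * j + 1 - t - b)) = real_of_int (int (2 * j + 2 - (j - t)) *
      dual_weight_a j t + 2 * (\<Sum>b\<in>{j - t..<2 * j + 2}. dual_weight_a j b)) / ((real j + 1) * (3 * real j + 2)\<^sup>2)"
    unfolding dual_a_def by (rule line_sum_tri_dual[OF _ W]) (use assms in auto)
  also have "\<dots> = 1"
    unfolding window_dual_weight_a_low[OF assms] by simp
  finally show ?thesis .
qed

lemma line_sum_dual_a_mid:
  assumes "j < t" "t \<le> 2 * j"
  shows "(\<Sum>b\<le>3 * j + 1 - t. dual_a j t b (3 * j + 1 - t - b)) = 1"
proof -
  have W: "{b. b \<le> 3 * j + 1 - t \<and> b \<le> 2 * j + 1 \<and> 3 * j + 1 - t - b \<le> 2 * j + 1} = {0..<3 * j + 2 - t}"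
    using assms by auto
  have "(\<Sum>b\<le>3 * j + 1 - t. dual_a j t b (3 * j + 1 - t - b)) = real_of_int (int (3 * j + 2 - t - 0) *
      dual_weight_a j t + 2 * (\<Sum>b\<in>{0..<3 * j + 2 - t}. dual_weight_a j b)) / ((real j + 1) * (3 * real j + 2)\<^sup>2)"
    unfolding dual_a_def by (rule line_sum_tri_dual[OF _ W]) (use assms in auto)
  also have "\<dots> = 1"
    unfolding window_dual_weight_a_mid[OF assms] by simp
  finally show ?thesis .
qed

lemma line_sum_dual_a_top:
  assumes "t = 2 * j + 1"
  shows "(\<Sum>b\<le>3 * j + 1 - t. dual_a j t b (3 * j + 1 - t - b)) = real (2 * j + 1) / real (3 * j + 2)"
proof -
  have W: "{b. b \<le> 3 * j + 1 - t \<and> b \<le> 2 * j + 1 \<and> 3 * j + 1 - t - b \<le> 2 * j + 1} = {0..<j + 1}"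
    using assms by auto
  have "(\<Sum>b\<le>3 * j + 1 - t. dual_a j t b (3 * j + 1 - t - b)) = real_of_int (int (j + 1 - 0) *
      dual_weight_a j t + 2 * (\<Sum>b\<in>{0..<j + 1}. dual_weight_a j b)) / ((real j + 1) * (3 * real j + 2)\<^sup>2)"
    unfolding dual_a_def by (rule line_sum_tri_dual[OF _ W]) (use assms in auto)
  also have "\<dots> = real (2 * j + 1) / real (3 * j + 2)"
  proof -
    have "(real j + 1) * (3 * real j + 2)\<^sup>2 = (3 * real j + 2) * ((real j + 1) * (3 * real j + 2))"
      by (simp add: power2_eq_square)
    moreover have "(real j + 1) * (3 * real j + 2) \<noteq> 0"
      by simp
    ultimately show ?thesis
      unfolding assms window_dual_weight_a_top by (simp add: add.commute)
  qed
  finally show ?thesis .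
qed

lemma line_sum_dual_a:
  "(\<Sum>b\<le>3 * j + 1 - t. dual_a j t b (3 * j + 1 - t - b)) =
    (if t \<le> 2 * j then 1 else if t = 2 * j + 1 then real (2 * j + 1) / real (3 * j + 2) else 0)"
proof -
  consider "t \<le> j" | "j < t" "t \<le> 2 * j" | "t = 2 * j + 1" | "2 * j + 1 < t"
    by linarith
  then show ?thesis
  proof cases
    case 3
    then show ?thesis
      using line_sum_dual_a_top[OF 3] by simp
  next
    case 4
    then have "(\<Sum>b\<le>3 * j + 1 - t. dual_a j t b (3 * j + 1 - t - b)) = 0"
      unfolding dual_a_def by (rule line_sum_tri_dual_out)
    then show ?thesis
      using 4 by simp
  qed (use line_sum_dual_a_low line_sum_dual_a_mid in simp_all)
qed

lemma dual_a_le: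
  assumes "x + y + z = 3 * j + 1"
  shows "dual_a j x y z \<le> 1 / (real j + 1)"
proof -
  have "dual_weight_a j x + dual_weight_a j y + dual_weight_a j z \<le> (3 * int j + 2)\<^sup>2"
    if "x \<le> 2 * j + 1" "y \<le> 2 * j + 1" "z \<le> 2 * j + 1"
    using assms that
  proof (induction x y z rule: sorted_triple_wlog)
    case (3 x y z)
    then show ?case
      using dual_weight_a_sorted_triple by blast
  qed (simp_all add: ac_simps)
  then have "dual_a j x y z \<le> real_of_int ((3 * int j + 2)\<^sup>2) / ((real j + 1) * (3 * real j + 2)\<^sup>2)"
    unfolding dual_a_def by (intro tri_dual_le) auto
  also have "\<dots> = 1 / (real j + 1)"
    by simp
  finally show ?thesis .
qed

lemma sum_dual_a:
  "(\<Sum>t\<le>3 * j + 1. \<Sum>b\<le>3 * j + 1 - t. dual_a j t b (3 * j + 1 - t - b)) =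
    real (2 * j + 1) + real (2 * j + 1) / real (3 * j + 2)"
proof (rule sum_line_values)
  fix t
  show "(\<Sum>b\<le>3 * j + 1 - t. dual_a j t b (3 * j + 1 - t - b)) = (if t < 2 * j + 1 then 1
      else if t = 2 * j + 1 then real (2 * j + 1) / real (3 * j + 2) else 0)"
    unfolding line_sum_dual_a by simp
qed simp

lemma fstar_3j_plus_2_upper:
  "fstar (3 * j + 2) 2 \<le> real (2 * j + 1) + real (2 * j + 1) / real (3 * j + 2)"
proof -
  have "fstar (3 * j + 1 + 1) 2 \<le>
      3 * real (2 * j + 1) * (real (2 * j + 1) + 1) / (2 * real (3 * (2 * j + 1) - (3 * j + 1)))"
    by (rule fstar_le_ramp) auto
  also have "\<dots> = real (2 * j + 1) + real (2 * j + 1) / real (3 * j + 2)"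
    by (simp add: field_simps)
  finally show ?thesis
    by simp
qed

lemma fstar_3j_plus_2_lower:
  "real (2 * j + 1) + real (2 * j + 1) / real (3 * j + 2) \<le> fstar (3 * j + 2) 2"
proof -
  have "(\<Sum>t\<le>3 * j + 1. \<Sum>b\<le>3 * j + 1 - t. dual_a j t b (3 * j + 1 - t - b)) \<le> fstar (3 * j + 1 + 1) 2"
  proof (rule fstar_ge_symmetric_dual[where m = "j + 1" and \<beta> = "1 / (real j + 1)" and \<gamma> = 0])
    show "sym3 (dual_a j)"
      by (simp add: dual_a_def sym3_tri_dual)
    show "0 \<le> dual_a j x y z" for x y z
      unfolding dual_a_def by (rule tri_dual_nonneg) (simp_all add: dual_weight_a_nonneg)
    show "(\<Sum>b\<le>3 * j + 1 - t. dual_a j t b (3 * j + 1 - t - b)) \<le> 1" for t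
      unfolding line_sum_dual_a by simp
    show "x \<le> 2 * (j + 1)" if "dual_a j x y z \<noteq> 0" for x y z
      using that by (auto simp: dual_a_def tri_dual_def split: if_splits)
    show "dual_a j x y z \<le> 1 / (real j + 1)" if "x + y + z = 3 * j + 1" for x y z
      using that by (rule dual_a_le)
    show "dual_a j (2 * (j + 1)) y z \<le> 0" for y z
      by (simp add: dual_a_def tri_dual_def)
  qed simp_all
  then show ?thesis
    unfolding sum_dual_a by simp
qed

lemma fstar_3j_plus_2: "fstar (3 * j + 2) 2 = real (2 * j + 1) + real (2 * j + 1) / real (3 * j + 2)"
  using fstar_3j_plus_2_upper fstar_3j_plus_2_lower by (rule antisym)

section \<open>The case \<open>n = 3 j + 3\<close>\<close>

definition dual_weight_b :: "nat \<Rightarrow> nat \<Rightarrow> int" where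
  "dual_weight_b j c =
     (if c \<le> j then (int j + 1) * (3 * int j + 2 - 3 * int c)
      else if c \<le> 2 * j + 1 then (2 * int j + 3) * (3 * int c - 3 * int j - 2) else 0)"

lemma dual_weight_b_nonneg: "0 \<le> dual_weight_b j c"
  by (simp add: dual_weight_b_def)

lemma dual_weight_b_low: "c \<le> j \<Longrightarrow> dual_weight_b j c = (int j + 1) * (3 * int j + 2 - 3 * int c)"
  and dual_weight_b_mid: "j < c \<Longrightarrow> c \<le> 2 * j + 1 \<Longrightarrow>
    dual_weight_b j c = (2 * int j + 3) * (3 * int c - 3 * int j - 2)"
  and dual_weight_b_top: "2 * j + 1 < c \<Longrightarrow> dual_weight_b j c = 0"
  by (simp_all add: dual_weight_b_def)

lemma dual_weight_b_pair:
  assumes "y + z = j"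
  shows "dual_weight_b j y + dual_weight_b j z = (int j + 1) * (3 * int j + 4)"
proof -
  have "y \<le> j" "z \<le> j" and z: "int z = int j - int y"
    using assms by auto
  show ?thesis
    unfolding dual_weight_b_low[OF \<open>y \<le> j\<close>] dual_weight_b_low[OF \<open>z \<le> j\<close>] z
    by (simp add: algebra_simps)
qed

lemma dual_weight_b_sorted_triple:
  assumes sorted: "x \<le> y" "y \<le> z" and sum: "x + y + z = 3 * j + 2" and "z \<le> 2 * j + 2"
  shows "dual_weight_b j x + dual_weight_b j y + dual_weight_b j z \<le> 3 * (int j + 1) * (3 * int j + 4)"
proof -
  let ?u = "dual_weight_b j"
  have "x \<le> j"
    using sorted sum by linarith
  consider "y \<le> j" "z = 2 * j + 2" | "y \<le> j" "z \<le> 2 * j + 1" | "j < y" "z \<le> 2 * j + 1"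
    using sorted sum \<open>z \<le> 2 * j + 2\<close> by linarith
  then show ?thesis
  proof cases
    case 1
    then have "x + y = j" "?u z = 0"
      using sum by (simp_all add: dual_weight_b_top)
    then have "?u x + ?u y + ?u z = (int j + 1) * (3 * int j + 4)"
      using dual_weight_b_pair[of x y j] by simp
    then show ?thesis
      by simp
  next
    case 2
    have "j < z"
      using sum sorted 2 by linarith
    have x: "int x = 3 * int j + 2 - int y - int z"
      using sum by simp
    have "?u x + ?u y + ?u z = (3 * int j + 4) * (3 * int z - 3 * int j - 2)"
      unfolding dual_weight_b_low[OF \<open>x \<le> j\<close>] dual_weight_b_low[OF \<open>y \<le> j\<close>]
        dual_weight_b_mid[OF \<open>j < z\<close> \<open>z \<le> 2 * j + 1\<close>] x
      by (simp add: algebra_simps)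
    also have "\<dots> \<le> (3 * int j + 4) * (3 * int j + 3)"
      using \<open>z \<le> 2 * j + 1\<close> by (intro mult_left_mono) auto
    finally show ?thesis
      by (simp add: algebra_simps)
  next
    case 3
    have "j < z" "y \<le> 2 * j + 1"
      using sorted 3 by linarith+
    have y: "int y = 3 * int j + 2 - int x - int z"
      using sum by simp
    have "?u x + ?u y + ?u z = (3 * int j + 4) * (3 * int j + 2 - 3 * int x)"
      unfolding dual_weight_b_low[OF \<open>x \<le> j\<close>] dual_weight_b_mid[OF \<open>j < y\<close> \<open>y \<le> 2 * j + 1\<close>]
        dual_weight_b_mid[OF \<open>j < z\<close> \<open>z \<le> 2 * j + 1\<close>] y
      by (simp add: algebra_simps)
    also have "\<dots> \<le> (3 * int j + 4) * (3 * int j + 3)"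
      by (intro mult_left_mono) auto
    finally show ?thesis
      by (simp add: algebra_simps)
  qed
qed

lemma double_sum_dual_weight_b_low:
  "p \<le> q \<Longrightarrow> q \<le> j + 1 \<Longrightarrow> 2 * (\<Sum>c\<in>{p..<q}. dual_weight_b j c) =
    (int q - int p) * (- 3 * (int j + 1) * (int p + int q - 1) + 2 * ((int j + 1) * (3 * int j + 2)))"
  by (rule double_sum_affine) (auto simp: dual_weight_b_low algebra_simps)

lemma double_sum_dual_weight_b_mid:
  "j < p \<Longrightarrow> p \<le> q \<Longrightarrow> q \<le> 2 * j + 2 \<Longrightarrow> 2 * (\<Sum>c\<in>{p..<q}. dual_weight_b j c) =
    (int q - int p) * (3 * (2 * int j + 3) * (int p + int q - 1) + 2 * (- (2 * int j + 3) * (3 * int j + 2)))"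
  by (rule double_sum_affine) (auto simp: dual_weight_b_mid algebra_simps)

lemma window_dual_weight_b_low:
  assumes "t \<le> j"
  shows "int (2 * j + 3 - (j - t)) * dual_weight_b j t + 2 * (\<Sum>b\<in>{j - t..<2 * j + 3}. dual_weight_b j b) =
    (int j + 1) * (3 * int j + 4)\<^sup>2"
proof -
  have "(\<Sum>b\<in>{j - t..<2 * j + 3}. dual_weight_b j b) =
      (\<Sum>b\<in>{j - t..<j + 1}. dual_weight_b j b) + (\<Sum>b\<in>{j + 1..<2 * j + 3}. dual_weight_b j b)"
    by (rule sum.atLeastLessThan_concat[symmetric]) auto
  also have "(\<Sum>b\<in>{j + 1..<2 * j + 3}. dual_weight_b j b) =
      (\<Sum>b\<in>{j + 1..<2 * j + 2}. dual_weight_b j b) + (\<Sum>b\<in>{2 * j + 2..<2 * j + 3}. dual_weight_b j b)"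
    by (rule sum.atLeastLessThan_concat[symmetric]) auto
  finally have split: "2 * (\<Sum>b\<in>{j - t..<2 * j + 3}. dual_weight_b j b) =
      2 * (\<Sum>b\<in>{j - t..<j + 1}. dual_weight_b j b) + 2 * (\<Sum>b\<in>{j + 1..<2 * j + 2}. dual_weight_b j b)"
    by (simp add: dual_weight_b_top)
  have low: "j - t \<le> j + 1" "j + 1 \<le> j + 1" and mid: "j < j + 1" "j + 1 \<le> 2 * j + 2" "2 * j + 2 \<le> 2 * j + 2"
    by auto
  have "int (2 * j + 3 - (j - t)) = int j + 3 + int t" "int (j - t) = int j - int t"
    using assms by auto
  then show ?thesis
    unfolding split double_sum_dual_weight_b_low[OF low] double_sum_dual_weight_b_mid[OF mid]
      dual_weight_b_low[OF assms]
    by (simp add: algebra_simps power2_eq_square)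
qed

lemma window_dual_weight_b_mid:
  assumes "j < t" "t \<le> 2 * j + 1"
  shows "int (3 * j + 3 - t - 0) * dual_weight_b j t + 2 * (\<Sum>b\<in>{0..<3 * j + 3 - t}. dual_weight_b j b) =
    (int j + 1) * (3 * int j + 4)\<^sup>2"
proof -
  have "(\<Sum>b\<in>{0..<3 * j + 3 - t}. dual_weight_b j b) =
      (\<Sum>b\<in>{0..<j + 1}. dual_weight_b j b) + (\<Sum>b\<in>{j + 1..<3 * j + 3 - t}. dual_weight_b j b)"
    using assms by (intro sum.atLeastLessThan_concat[symmetric]) auto
  then have split: "2 * (\<Sum>b\<in>{0..<3 * j + 3 - t}. dual_weight_b j b) =
      2 * (\<Sum>b\<in>{0..<j + 1}. dual_weight_b j b) + 2 * (\<Sum>b\<in>{j + 1..<3 * j + 3 - t}. dual_weight_b j b)"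
    by simp
  have mid: "j < j + 1" "j + 1 \<le> 3 * j + 3 - t" "3 * j + 3 - t \<le> 2 * j + 2"
    using assms by auto
  have "int (3 * j + 3 - t - 0) = 3 * int j + 3 - int t" "int (3 * j + 3 - t) = 3 * int j + 3 - int t"
    using assms by auto
  then show ?thesis
    unfolding split double_sum_dual_weight_b_low[of 0 "j + 1" j, OF le0 order_refl]
      double_sum_dual_weight_b_mid[OF mid] dual_weight_b_mid[OF assms]
    by (simp add: algebra_simps power2_eq_square)
qed

lemma window_dual_weight_b_top:
  "int (j + 1 - 0) * dual_weight_b j (2 * j + 2) + 2 * (\<Sum>b\<in>{0..<j + 1}. dual_weight_b j b) =
    (int j + 1) * (int j + 1) * (3 * int j + 4)"
  unfolding double_sum_dual_weight_b_low[of 0 "j + 1" j, OF le0 order_refl]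
  by (simp add: dual_weight_b_top algebra_simps)

definition dual_b :: "nat \<Rightarrow> nat \<Rightarrow> nat \<Rightarrow> nat \<Rightarrow> real" where
  "dual_b j = tri_dual (2 * j + 2) ((real j + 1) * (3 * real j + 4)\<^sup>2) (dual_weight_b j)"

lemma line_sum_dual_b_low:
  assumes "t \<le> j"
  shows "(\<Sum>b\<le>3 * j + 2 - t. dual_b j t b (3 * j + 2 - t - b)) = 1"
proof -
  have W: "{b. b \<le> 3 * j + 2 - t \<and> b \<le> 2 * j + 2 \<and> 3 * j + 2 - t - b \<le> 2 * j + 2} = {j - t..<2 * j + 3}"
    using assms by auto
  have "(\<Sum>b\<le>3 * j + 2 - t. dual_b j t b (3 * j + 2 - t - b)) = real_of_int (int (2 * j + 3 - (j - t)) *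
      dual_weight_b j t + 2 * (\<Sum>b\<in>{j - t..<2 * j + 3}. dual_weight_b j b)) / ((real j + 1) * (3 * real j + 4)\<^sup>2)"
    unfolding dual_b_def by (rule line_sum_tri_dual[OF _ W]) (use assms in auto)
  also have "\<dots> = 1"
    unfolding window_dual_weight_b_low[OF assms] by simp
  finally show ?thesis .
qed

lemma line_sum_dual_b_mid:
  assumes "j < t" "t \<le> 2 * j + 1"
  shows "(\<Sum>b\<le>3 * j + 2 - t. dual_b j t b (3 * j + 2 - t - b)) = 1"
proof -
  have W: "{b. b \<le> 3 * j + 2 - t \<and> b \<le> 2 * j + 2 \<and> 3 * j + 2 - t - b \<le> 2 * j + 2} = {0..<3 * j + 3 - t}"
    using assms by auto
  have "(\<Sum>b\<le>3 * j + 2 - t. dual_b j t b (3 * j + 2 - t - b)) = real_of_int (int (3 * j + 3 - t - 0) *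
      dual_weight_b j t + 2 * (\<Sum>b\<in>{0..<3 * j + 3 - t}. dual_weight_b j b)) / ((real j + 1) * (3 * real j + 4)\<^sup>2)"
    unfolding dual_b_def by (rule line_sum_tri_dual[OF _ W]) (use assms in auto)
  also have "\<dots> = 1"
    unfolding window_dual_weight_b_mid[OF assms] by simp
  finally show ?thesis .
qed

lemma line_sum_dual_b_top:
  assumes "t = 2 * j + 2"
  shows "(\<Sum>b\<le>3 * j + 2 - t. dual_b j t b (3 * j + 2 - t - b)) = real (j + 1) / real (3 * j + 4)"
proof -
  have W: "{b. b \<le> 3 * j + 2 - t \<and> b \<le> 2 * j + 2 \<and> 3 * j + 2 - t - b \<le> 2 * j + 2} = {0..<j + 1}"
    using assms by auto
  have "(\<Sum>b\<le>3 * j + 2 - t. dual_b j t b (3 * j + 2 - t - b)) = real_of_int (int (j + 1 - 0) *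
      dual_weight_b j t + 2 * (\<Sum>b\<in>{0..<j + 1}. dual_weight_b j b)) / ((real j + 1) * (3 * real j + 4)\<^sup>2)"
    unfolding dual_b_def by (rule line_sum_tri_dual[OF _ W]) (use assms in auto)
  also have "\<dots> = real (j + 1) / real (3 * j + 4)"
  proof -
    have "(real j + 1) * (3 * real j + 4)\<^sup>2 = (3 * real j + 4) * ((real j + 1) * (3 * real j + 4))"
      by (simp add: power2_eq_square)
    moreover have "(real j + 1) * (3 * real j + 4) \<noteq> 0"
      by simp
    ultimately show ?thesis
      unfolding assms window_dual_weight_b_top by (simp add: add.commute)
  qed
  finally show ?thesis .
qed

lemma line_sum_dual_b:
  "(\<Sum>b\<le>3 * j + 2 - t. dual_b j t b (3 * j + 2 - t - b)) =
    (if t \<le> 2 * j + 1 then 1 else if t = 2 * j + 2 then real (j + 1) / real (3 * j + 4) else 0)"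
proof -
  consider "t \<le> j" | "j < t" "t \<le> 2 * j + 1" | "t = 2 * j + 2" | "2 * j + 2 < t"
    by linarith
  then show ?thesis
  proof cases
    case 3
    then show ?thesis
      using line_sum_dual_b_top[OF 3] by simp
  next
    case 4
    then have "(\<Sum>b\<le>3 * j + 2 - t. dual_b j t b (3 * j + 2 - t - b)) = 0"
      unfolding dual_b_def by (rule line_sum_tri_dual_out)
    then show ?thesis
      using 4 by simp
  qed (use line_sum_dual_b_low line_sum_dual_b_mid in simp_all)
qed

lemma dual_b_le:
  assumes "x + y + z = 3 * j + 2"
  shows "dual_b j x y z \<le> 3 / (3 * real j + 4)"
proof -
  have "dual_weight_b j x + dual_weight_b j y + dual_weight_b j z \<le> 3 * (int j + 1) * (3 * int j + 4)"
    if "x \<le> 2 * j + 2" "y \<le> 2 * j + 2" "z \<le> 2 * j + 2"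
    using assms that
  proof (induction x y z rule: sorted_triple_wlog)
    case (3 x y z)
    then show ?case
      using dual_weight_b_sorted_triple by blast
  qed (simp_all add: ac_simps)
  then have "dual_b j x y z \<le> real_of_int (3 * (int j + 1) * (3 * int j + 4)) / ((real j + 1) * (3 * real j + 4)\<^sup>2)"
    unfolding dual_b_def by (intro tri_dual_le) auto
  also have "\<dots> = 3 / (3 * real j + 4)"
  proof -
    have "3 * real j + 3 = 3 * (real j + 1)"
      by simp
    then show ?thesis
      by (simp add: divide_simps power2_eq_square)
  qed
  finally show ?thesis .
qed

lemma dual_b_top:
  assumes "2 * j + 2 + y + z = 3 * j + 2"
  shows "dual_b j (2 * j + 2) y z \<le> 1 / (3 * real j + 4)"
proof -
  have "y + z = j" "y \<le> j" "z \<le> j"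
    using assms by auto
  then have "dual_weight_b j (2 * j + 2) + dual_weight_b j y + dual_weight_b j z = (int j + 1) * (3 * int j + 4)"
    using dual_weight_b_pair[of y z j] by (simp add: dual_weight_b_top)
  then have "dual_b j (2 * j + 2) y z = real_of_int ((int j + 1) * (3 * int j + 4)) / ((real j + 1) * (3 * real j + 4)\<^sup>2)"
    using \<open>y \<le> j\<close> \<open>z \<le> j\<close> by (simp add: dual_b_def tri_dual_def)
  also have "\<dots> = 1 / (3 * real j + 4)"
    by (simp add: power2_eq_square)
  finally show ?thesis
    by simp
qed

lemma sum_dual_b:
  "(\<Sum>t\<le>3 * j + 2. \<Sum>b\<le>3 * j + 2 - t. dual_b j t b (3 * j + 2 - t - b)) =
    real (2 * j + 2) + real (j + 1) / real (3 * j + 4)"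
proof (rule sum_line_values)
  fix t
  show "(\<Sum>b\<le>3 * j + 2 - t. dual_b j t b (3 * j + 2 - t - b)) = (if t < 2 * j + 2 then 1
      else if t = 2 * j + 2 then real (j + 1) / real (3 * j + 4) else 0)"
    unfolding line_sum_dual_b by simp
qed simp

lemma fstar_3j_plus_3_upper:
  "fstar (3 * j + 3) 2 \<le> real (2 * j + 2) + real (j + 1) / real (3 * j + 4)"
proof -
  have "fstar (3 * j + 2 + 1) 2 \<le>
      3 * real (2 * j + 2) * (real (2 * j + 2) + 1) / (2 * real (3 * (2 * j + 2) - (3 * j + 2)))"
    by (rule fstar_le_ramp) auto
  also have "\<dots> = real (2 * j + 2) + real (j + 1) / real (3 * j + 4)"
    by (simp add: field_simps)
  finally show ?thesis
    using arg_cong[of "3 * j + 2 + 1" "3 * j + 3" "\<lambda>n. fstar n 2"] by simp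
qed

lemma fstar_3j_plus_3_lower:
  "real (2 * j + 2) + real (j + 1) / real (3 * j + 4) \<le> fstar (3 * j + 3) 2"
proof -
  have "(\<Sum>t\<le>3 * j + 2. \<Sum>b\<le>3 * j + 2 - t. dual_b j t b (3 * j + 2 - t - b)) \<le> fstar (3 * j + 2 + 1) 2"
  proof (rule fstar_ge_symmetric_dual[where m = "j + 1" and \<beta> = "3 / (3 * real j + 4)"
        and \<gamma> = "1 / (3 * real j + 4)"])
    show "sym3 (dual_b j)"
      by (simp add: dual_b_def sym3_tri_dual)
    show "0 \<le> dual_b j x y z" for x y z
      unfolding dual_b_def by (rule tri_dual_nonneg) (simp_all add: dual_weight_b_nonneg)
    show "(\<Sum>b\<le>3 * j + 2 - t. dual_b j t b (3 * j + 2 - t - b)) \<le> 1" for t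
      unfolding line_sum_dual_b by simp
    show "x \<le> 2 * (j + 1)" if "dual_b j x y z \<noteq> 0" for x y z
      using that by (auto simp: dual_b_def tri_dual_def split: if_splits)
    show "dual_b j x y z \<le> 3 / (3 * real j + 4)" if "x + y + z = 3 * j + 2" for x y z
      using that by (rule dual_b_le)
    show "dual_b j (2 * (j + 1)) y z \<le> 1 / (3 * real j + 4)" if "2 * (j + 1) + y + z = 3 * j + 2" for y z
      using dual_b_top[of j y z] that by simp
    show "real (j + 1) * (3 / (3 * real j + 4)) + 1 / (3 * real j + 4) \<le> 1"
      by (simp add: field_simps)
  qed simp_all
  then show ?thesis
    unfolding sum_dual_b using arg_cong[of "3 * j + 2 + 1" "3 * j + 3" "\<lambda>n. fstar n 2"] by simp
qed

lemma fstar_3j_plus_3: "fstar (3 * j + 3) 2 = real (2 * j + 2) + real (j + 1) / real (3 * j + 4)"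
  using fstar_3j_plus_3_upper fstar_3j_plus_3_lower by (rule antisym)

theorem mainTheorem2:
  fixes j :: nat
  shows "fstar (3*j+2) 2 = real (2*j+1) + real (2*j+1) / real (3*j+2) \<and>
         fstar (3*j+3) 2 = real (2*j+2) + real (j+1) / real (3*j+4)"
  using fstar_3j_plus_2 fstar_3j_plus_3 by blast

end
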